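(* Let $q,s\in\mathbb{H}$ with $qs\neq sq$ and $|q|<|s|$. Then $q\neq\bar s$ (so $s+q-2\,\mathrm{Re}[s]=q-\bar s\neq 0$), and the element $$S(s,q)=(s+q-2\,\mathrm{Re}[s])^{-1}(sq-|s|^2)-q=-(q-\bar s)^{-1}\big(q^2-2q\,\mathrm{Re}[s]+|s|^2\big)$$ (the two expressions being equal) is the two-sided inverse of $S^{-1}(s,q)=\sum_{n\ge0} q^n s^{-1-n}$; in particular it is a solution of $S^2+Sq-sS=0$.
   Context: $\mathbb{H}$ denotes the algebra of quaternions; $\bar s$ is the conjugate, $|s|^2=s\bar s$, $\mathrm{Re}[s]$ the real part. *)

theory Defs
  imports "HOL-Analysis.Analysis"
begin

text \<open>It is made an instance of real_normed_div_algebra so that powers,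
inverses and series are the library ones.\<close>

datatype quat = Quat (qr: real) (qi: real) (qj: real) (qk: real)

lemma quat_eq_iff: "x = y \<longleftrightarrow> qr x = qr y \<and> qi x = qi y \<and> qj x = qj y \<and> qk x = qk y"
  by (cases x; cases y) auto

instantiation quat :: ab_group_add
begin
definition "0 = Quat 0 0 0 0"
definition "x + y = Quat (qr x + qr y) (qi x + qi y) (qj x + qj y) (qk x + qk y)"
definition "x - y = Quat (qr x - qr y) (qi x - qi y) (qj x - qj y) (qk x - qk y)"
definition "- x = Quat (- qr x) (- qi x) (- qj x) (- qk x)"
instance
  by standard (simp_all add: zero_quat_def plus_quat_def minus_quat_def uminus_quat_def quat_eq_iff)
end

instantiation quat :: real_vector
begin
definition "scaleR a x = Quat (a * qr x) (a * qi x) (a * qj x) (a * qk x)"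
instance
  by standard (simp_all add: scaleR_quat_def plus_quat_def quat_eq_iff algebra_simps)
end

instantiation quat :: ring_1
begin
definition "1 = Quat 1 0 0 0"
definition "x * y = Quat
   (qr x * qr y - qi x * qi y - qj x * qj y - qk x * qk y)
   (qr x * qi y + qi x * qr y + qj x * qk y - qk x * qj y)
   (qr x * qj y - qi x * qk y + qj x * qr y + qk x * qi y)
   (qr x * qk y + qi x * qj y - qj x * qi y + qk x * qr y)"
instance
  by standard (simp_all add: one_quat_def times_quat_def plus_quat_def zero_quat_def quat_eq_iff
      algebra_simps)
end

instance quat :: real_algebra_1
  by standard (simp_all add: scaleR_quat_def times_quat_def quat_eq_iff algebra_simps)

definition qnormsq :: "quat \<Rightarrow> real" where
  "qnormsq x = (qr x)\<^sup>2 + (qi x)\<^sup>2 + (qj x)\<^sup>2 + (qk x)\<^sup>2"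

lemma qnormsq_eq_0: "qnormsq x = 0 \<longleftrightarrow> x = 0"
  by (simp add: qnormsq_def zero_quat_def quat_eq_iff sum_power2_eq_zero_iff
      add_nonneg_eq_0_iff)

instantiation quat :: division_ring
begin
definition "inverse x = Quat (qr x / qnormsq x) (- qi x / qnormsq x)
   (- qj x / qnormsq x) (- qk x / qnormsq x)"
definition "x div (y::quat) = x * inverse y"
instance
proof
  fix x :: quat
  assume "x \<noteq> 0"
  then have "qnormsq x \<noteq> 0" by (simp add: qnormsq_eq_0)
  then show "inverse x * x = 1"
    by (simp add: inverse_quat_def times_quat_def one_quat_def quat_eq_iff
        qnormsq_def power2_eq_square divide_simps)
  from \<open>qnormsq x \<noteq> 0\<close> show "x * inverse x = 1"
    by (simp add: inverse_quat_def times_quat_def one_quat_def quat_eq_iff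
        qnormsq_def power2_eq_square divide_simps)
qed (simp_all add: inverse_quat_def divide_quat_def zero_quat_def quat_eq_iff)
end

instance quat :: real_div_algebra ..

instantiation quat :: real_normed_div_algebra
begin
definition "norm x = sqrt (qnormsq x)"
definition quat_sgn_def: "sgn (x::quat) = x /\<^sub>R norm x"
definition dist_quat_def: "dist x y = norm (x - y :: quat)"
definition uniformity_quat_def [code del]:
  "(uniformity :: (quat \<times> quat) filter) = (INF e\<in>{0 <..}. principal {(x, y). dist x y < e})"
definition open_quat_def [code del]:
  "open (U :: quat set) \<longleftrightarrow> (\<forall>x\<in>U. eventually (\<lambda>(x', y). x' = x \<longrightarrow> y \<in> U) uniformity)"
instance
proof
  fix r :: real and x y :: quat
  show "(norm x = 0) = (x = 0)"
    by (simp add: norm_quat_def qnormsq_eq_0)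
  define f where "f z i = (if i = 0 then qr z else if i = 1 then qi z
     else if i = 2 then qj z else qk z)" for z and i :: nat
  have L: "norm z = L2_set (f z) {0..3}" for z
    by (simp add: norm_quat_def qnormsq_def L2_set_def f_def numeral_3_eq_3 add.assoc)
  have "L2_set (f (x + y)) {0..3} = L2_set (\<lambda>i. f x i + f y i) {0..3}"
    by (rule L2_set_cong) (auto simp: f_def plus_quat_def)
  then show "norm (x + y) \<le> norm x + norm y"
    using L2_set_triangle_ineq[of "f x" "f y" "{0..3}"] by (simp add: L)
  show "norm (scaleR r x) = \<bar>r\<bar> * norm x"
    by (simp add: norm_quat_def qnormsq_def scaleR_quat_def power_mult_distrib
        distrib_left [symmetric] real_sqrt_mult)
  show "norm (x * y) = norm x * norm y"
    by (simp add: norm_quat_def qnormsq_def times_quat_def real_sqrt_mult [symmetric]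
        power2_eq_square algebra_simps)
qed (rule quat_sgn_def dist_quat_def open_quat_def uniformity_quat_def)+
end

definition qcnj :: "quat \<Rightarrow> quat" where
  "qcnj x = Quat (qr x) (- qi x) (- qj x) (- qk x)"

definition qRe :: "quat \<Rightarrow> quat" where
  "qRe x = of_real (qr x)"

end

theory Submission
  imports Defs
begin

(* Let q, s be non-commuting quaternions with |q| < |s|, and write c = conj s,
   so that s + c = 2 Re[s] and c s = s c = |s|^2 are real, hence central.
   The proof separates algebra from analysis:
   1. In any division ring, for s and c with central sum and product, the element
      S = (q - c)^{-1} (s q - c s) - q equals -(q - c)^{-1} P(q), where
      P(q) = q^2 - q (s + c) + c s, and it solves S^2 + S q - s S = 0.
   2. In any division ring, an invertible solution S of this equation has an inverse
      U with U s - q U = 1 (a Sylvester equation).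
   3. In any normed division algebra with |q| < |s|, a solution U of U s - q U = 1 is
      the sum of the series S^{-1}(s,q) = sum q^n s^{-1-n}: its terms telescope as
      q^n U s^{-n} - q^{n+1} U s^{-n-1}.
   4. For quaternions, q <> conj s (else q and s commute) and P(q) <> 0 (a root of
      the characteristic polynomial of s either commutes with s or has the same norm
      as s), so S is defined and nonzero. *)

lemma quat_of_real: "(of_real r :: quat) = Quat r 0 0 0"
  by (simp add: of_real_def scaleR_quat_def one_quat_def)

lemma quat_of_real_commute: "(of_real r :: quat) * x = x * of_real r"
  by (simp add: quat_of_real times_quat_def quat_eq_iff)

lemma quat_norm_power2: "(norm x)\<^sup>2 = qnormsq x"
  by (simp add: norm_quat_def qnormsq_def)

lemma qcnj_mult_self:
  "qcnj s * s = of_real ((norm s)\<^sup>2)" "s * qcnj s = of_real ((norm s)\<^sup>2)"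
  unfolding quat_norm_power2
  by (simp_all add: quat_of_real qcnj_def times_quat_def quat_eq_iff qnormsq_def
      power2_eq_square)

lemma add_qcnj: "s + qcnj s = 2 * qRe s"
proof -
  have "(2::quat) = of_real 2" by simp
  then show ?thesis
    by (simp add: qRe_def quat_of_real qcnj_def plus_quat_def times_quat_def quat_eq_iff)
qed

text \<open>Let c play the role of the conjugate of s: the trace s + c and the norm c s are
  central.\<close>
lemma riccati_solution:
  fixes s c q :: "'a::division_ring"
  assumes trace_central: "\<And>x. (s + c) * x = x * (s + c)"
    and norm_central: "\<And>x. (c * s) * x = x * (c * s)"
    and "q \<noteq> c"
  defines "S \<equiv> inverse (q - c) * (s * q - c * s) - q"
    and "P \<equiv> q\<^sup>2 - q * (s + c) + c * s"
  shows "S = - (inverse (q - c) * P)" and "S\<^sup>2 + S * q - s * S = 0"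
proof -
  define A where "A = q - c"
  have A_nonzero: "A \<noteq> 0" using \<open>q \<noteq> c\<close> by (simp add: A_def)
  have AS: "A * S = - P"
  proof -
    have "A * S = (s * q - c * s) - A * q"
      using A_nonzero by (simp add: S_def A_def right_diff_distrib mult.assoc[symmetric])
    also have "\<dots> = - P"
      using trace_central[of q] by (simp add: A_def P_def power2_eq_square algebra_simps)
    finally show ?thesis .
  qed
  have "S = inverse A * (A * S)"
    using A_nonzero by (simp add: mult.assoc[symmetric])
  then show "S = - (inverse (q - c) * P)" using AS by (simp add: A_def)
  have Pq: "P * q = q * P"
  proof -
    have "P * q = q * q * q - q * ((s + c) * q) + (c * s) * q"
      unfolding P_def power2_eq_square
      by (simp only: left_diff_distrib distrib_right mult.assoc)
    also have "\<dots> = q * q * q - q * (q * (s + c)) + q * (c * s)"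
      by (simp only: trace_central[of q] norm_central[of q])
    also have "\<dots> = q * P"
      unfolding P_def power2_eq_square
      by (simp only: right_diff_distrib distrib_left mult.assoc)
    finally show ?thesis .
  qed
  have qA: "P + q * s - c * s = q * A"
    by (simp add: P_def A_def power2_eq_square algebra_simps)
  have As: "A * s = q * s - c * s"
    by (simp add: A_def left_diff_distrib)
  have "A * (S\<^sup>2 + S * q - s * S) = (A * S) * S + (A * S) * q - (A * s) * S"
    by (simp add: power2_eq_square ring_distribs mult.assoc)
  also have "\<dots> = - ((P + q * s - c * s) * S) - P * q"
    unfolding AS As by (simp add: ring_distribs)
  also have "\<dots> = - (q * (A * S)) - P * q"
    unfolding qA by (simp only: mult.assoc)
  also have "\<dots> = 0"
    unfolding AS Pq by simp
  finally show "S\<^sup>2 + S * q - s * S = 0"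
    using A_nonzero by simp
qed


lemma riccati_inverse_sylvester:
  fixes S s q :: "'a::division_ring"
  assumes "S \<noteq> 0" and "S\<^sup>2 + S * q - s * S = 0"
  shows "inverse S * s = q * inverse S + 1"
proof -
  define U where "U = inverse S"
  have "U * (S\<^sup>2 + S * q - s * S) * U = 0" using assms(2) by simp
  then have "(U * S) * (S * U) + (U * S) * q * U - U * s * (S * U) = 0"
    by (simp add: power2_eq_square algebra_simps)
  then have "1 + q * U - U * s = 0"
    using \<open>S \<noteq> 0\<close> by (simp add: U_def)
  then show ?thesis by (simp add: U_def algebra_simps)
qed

text \<open>If |q| < |s|, the solution of U s - q U = 1 is the sum of the series
  sum q^n s^{-1-n}; the partial sums telescope against q^n U s^{-n}, which tends to 0.\<close>
lemma sylvester_series: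
  fixes q s U :: "'a::real_normed_div_algebra"
  assumes "norm q < norm s" and sylvester: "U * s = q * U + 1"
  shows "(\<lambda>n. q ^ n * inverse s ^ Suc n) sums U"
proof -
  have s_nonzero: "s \<noteq> 0" using assms(1) by auto
  define h where "h n = q ^ n * U * inverse s ^ n" for n
  have step: "U - q * U * inverse s = inverse s"
  proof -
    have "U - q * U * inverse s = (U * s - q * U) * inverse s"
      using s_nonzero by (simp add: algebra_simps)
    then show ?thesis using sylvester by simp
  qed
  have telescope: "h n - h (Suc n) = q ^ n * inverse s ^ Suc n" for n
  proof -
    have "h n - h (Suc n) = q ^ n * (U - q * U * inverse s) * inverse s ^ n"
      unfolding h_def power_Suc2[of q] power_Suc[of "inverse s"]
      by (simp add: algebra_simps)
    also have "\<dots> = q ^ n * inverse s ^ Suc n"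
      unfolding step power_Suc[of "inverse s"] by (simp add: mult.assoc)
    finally show ?thesis .
  qed
  have norm_h: "norm (h n) = norm U * (norm q / norm s) ^ n" for n
    unfolding h_def norm_mult norm_power norm_inverse
    using s_nonzero by (simp add: field_simps)
  have "(\<lambda>n. norm U * (norm q / norm s) ^ n) \<longlonglongrightarrow> norm U * 0"
    by (intro tendsto_mult tendsto_const LIMSEQ_power_zero) (use assms(1) s_nonzero in auto)
  then have "(\<lambda>n. norm (h n)) \<longlonglongrightarrow> 0"
    unfolding norm_h mult_zero_right .
  then have "h \<longlonglongrightarrow> 0"
    by (rule tendsto_norm_zero_cancel)
  then have "(\<lambda>n. h n - h (Suc n)) sums (h 0 - 0)"
    by (rule telescope_sums')
  then show ?thesis
    unfolding telescope by (simp add: h_def)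
qed

text \<open>If q = conj s then q s = |s|^2 = s q.\<close>
lemma qcnj_noncommuting:
  fixes q s :: quat
  assumes "q * s \<noteq> s * q"
  shows "q \<noteq> qcnj s"
proof
  assume "q = qcnj s"
  then show False using assms by (simp add: qcnj_mult_self)
qed

text \<open>A root q of the characteristic polynomial of s either has the real part and norm
  of s, or (when Re q differs from Re s) is real and hence commutes with s.\<close>
lemma char_poly_nonzero:
  fixes q s :: quat
  assumes "q * s \<noteq> s * q" and "norm q < norm s"
  shows "q\<^sup>2 - 2 * q * qRe s + of_real ((norm s)\<^sup>2) \<noteq> 0"
proof
  assume root: "q\<^sup>2 - 2 * q * qRe s + of_real ((norm s)\<^sup>2) = 0"
  have two: "(2::quat) = of_real 2" by simp
  have norm_less: "qnormsq q < qnormsq s"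
    using assms(2) by (simp add: norm_quat_def)
  obtain a b c d where q: "q = Quat a b c d" by (cases q)
  obtain r x y z where s: "s = Quat r x y z" by (cases s)
  have coords: "a*a - b*b - c*c - d*d - 2*a*r + (r*r + x*x + y*y + z*z) = 0"
      "b * (a - r) = 0" "c * (a - r) = 0" "d * (a - r) = 0"
    using root unfolding quat_norm_power2 q s two
    by (simp_all add: quat_of_real qRe_def power2_eq_square times_quat_def plus_quat_def
        minus_quat_def zero_quat_def quat_eq_iff qnormsq_def algebra_simps)
  show False
  proof (cases "a = r")
    case True
    then show ?thesis
      using coords(1) norm_less by (simp add: q s qnormsq_def power2_eq_square)
  next
    case False
    then have "b = 0" "c = 0" "d = 0" using coords by auto
    then show ?thesis
      using assms(1) by (simp add: q s times_quat_def quat_eq_iff algebra_simps)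
  qed
qed

theorem theorem3p5:
  fixes q s :: quat
  assumes "q * s \<noteq> s * q" and "norm q < norm s"
  shows "q \<noteq> qcnj s
    \<and> s + q - 2 * qRe s = q - qcnj s
    \<and> (let S = inverse (s + q - 2 * qRe s) * (s * q - of_real ((norm s)\<^sup>2)) - q in
         S = - (inverse (q - qcnj s) * (q\<^sup>2 - 2 * q * qRe s + of_real ((norm s)\<^sup>2)))
       \<and> (\<exists>T. (\<lambda>n. q ^ n * inverse s ^ Suc n) sums T \<and> S * T = 1 \<and> T * S = 1)
       \<and> S\<^sup>2 + S * q - s * S = 0)"
proof -
  let ?c = "qcnj s"
  have q_ne: "q \<noteq> ?c" using assms(1) by (rule qcnj_noncommuting)
  have trace: "s + ?c = 2 * qRe s" by (rule add_qcnj)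
  have norm: "?c * s = of_real ((norm s)\<^sup>2)" by (simp add: qcnj_mult_self)
  have denom: "s + q - 2 * qRe s = q - ?c" using trace by (simp add: algebra_simps)
  define S where "S = inverse (q - ?c) * (s * q - ?c * s) - q"
  have trace_central: "(s + ?c) * x = x * (s + ?c)" for x
    unfolding trace qRe_def by (metis of_real_numeral of_real_mult quat_of_real_commute)
  have norm_central: "(?c * s) * x = x * (?c * s)" for x
    unfolding norm by (rule quat_of_real_commute)
  note riccati_c = riccati_solution[OF trace_central norm_central q_ne]
  have S_explicit: "S = - (inverse (q - ?c) * (q\<^sup>2 - q * (s + ?c) + ?c * s))"
    unfolding S_def by (rule riccati_c(1))
  have riccati: "S\<^sup>2 + S * q - s * S = 0"
    unfolding S_def by (rule riccati_c(2))
  have S_alt: "S = - (inverse (q - ?c) * (q\<^sup>2 - 2 * q * qRe s + of_real ((norm s)\<^sup>2)))"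
    using S_explicit unfolding trace norm
    by (simp only: mult.assoc[symmetric] mult_2 mult_2_right distrib_left distrib_right)
  have "S \<noteq> 0"
    using S_alt char_poly_nonzero[OF assms] q_ne by simp
  then have series: "(\<lambda>n. q ^ n * inverse s ^ Suc n) sums inverse S"
    using sylvester_series[OF assms(2) riccati_inverse_sylvester[OF _ riccati]] by simp
  show ?thesis
    using q_ne denom S_alt riccati series \<open>S \<noteq> 0\<close>
    unfolding Let_def denom norm[symmetric] S_def[symmetric] by auto
qed

end
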